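(* Consider the algorithm PGiPN described in the context, applied with some $\epsilon\ge0$. Let $k$ be an iteration at which the algorithm did not stop and at which the switch condition $\mathrm{supp}(x^k)=\mathrm{supp}(\bar x^k)$, $\mathrm{supp}(Bx^k)=\mathrm{supp}(B\bar x^k)$ holds. Define $R_k(y)=\bar\mu_k[y-\mathrm{proj}_{\Pi_k}(y-\bar\mu_k^{-1}(G_k(y-x^k)+\nabla f(x^k)))]$ and $r_k(x)=\bar\mu_k[x-\mathrm{proj}_{\Pi_k}(x-\bar\mu_k^{-1}\nabla f(x))]$. Then: (i) for every $y$ sufficiently close to the (unique) minimizer of $\Theta_k$, the point $y-\bar\mu_k^{-1}R_k(y)$ satisfies both inexactness conditions $\Theta_k(y)\le\Theta_k(x^k)$ and $\mathrm{dist}(0,\partial\Theta_k(y))\le\frac{\min\{\bar\mu_k^{-1},1\}}{2}\min\{\|\bar\mu_k(x^k-\bar x^k)\|,\|\bar\mu_k(x^k-\bar x^k)\|^{1+\varsigma}\}$; (ii) for $y^k$ satisfying these conditions, the line search in the Newton step terminates after finitely many trials and $\alpha_k\ge\min\{1,\frac{(1-\varrho)b_1\beta}{L_1}\|\bar\mu_k(x^k-\bar x^k)\|^\sigma\}$; (iii) the second inexactness condition on $y^k$ implies $\|R_k(y^k)\|\le\frac12\min\{\|r_k(x^k)\|,\|r_k(x^k)\|^{1+\varsigma}\}$.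
   Context: Setting: $B\in\mathbb{R}^{p\times n}$, $\lambda_1,\lambda_2>0$, $l\le0\le u$ in $\mathbb{R}^n$, $f:\mathbb{R}^n\to\mathbb{R}$ twice continuously differentiable, $\Omega=\{x:l\le x\le u\}$, $g(x)=\lambda_1\|Bx\|_0+\lambda_2\|x\|_0+\delta_\Omega(x)$ ($\|\cdot\|_0$ = number of nonzeros, $\delta_\Omega$ indicator), $F=f+g$; $\mathrm{supp}(x)=\{i:x_i\ne0\}$; $\mathrm{prox}_{\mu g}(z)=\arg\min_x\{\frac1{2\mu}\|x-z\|^2+g(x)\}$; $L_1>0$ is a Lipschitz constant of $\nabla f$ on $\Omega$; $\Pi(z)=\{x\in\Omega:\mathrm{supp}(x)\subset\mathrm{supp}(z),\mathrm{supp}(Bx)\subset\mathrm{supp}(Bz)\}$; $\mathrm{proj}_C$ is Euclidean projection; $\partial$ denotes subdifferential. Algorithm PGiPN: parameters $\epsilon\ge0$, $\mu_{\max}>\mu_{\min}>0$, $\tau>1$, $\alpha>0$, $b_1>0$, $b_2\ge1$, $\varrho\in(0,\frac12)$, $\sigma\in(0,\frac12)$, $\varsigma\in(\sigma,1]$, $\beta\in(0,1)$, $x^0\in\Omega$. Iteration $k$: (PG step) pick $\mu_k\in[\mu_{\min},\mu_{\max}]$; let $m_k$ be the smallest nonnegative integer $m$ such that some $\bar x^k\in\mathrm{prox}_{(\mu_k\tau^m)^{-1}g}(x^k-(\mu_k\tau^m)^{-1}\nabla f(x^k))$ satisfies $F(\bar x^k)\le F(x^k)-\frac\alpha2\|x^k-\bar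 x^k\|^2$; set $\bar\mu_k=\mu_k\tau^{m_k}$. If $\bar\mu_k\|x^k-\bar x^k\|\le\epsilon$, stop. If the switch condition holds go to the Newton step, else set $x^{k+1}=\bar x^k$. (Newton step) let $\Pi_k=\Pi(x^k)$, $\Theta_k(x)=f(x^k)+\langle\nabla f(x^k),x-x^k\rangle+\frac12\langle x-x^k,G_k(x-x^k)\rangle+\delta_{\Pi_k}(x)$; find $y^k$ satisfying the two inexactness conditions stated in (i); set $d^k=y^k-x^k$; let $t_k$ be the smallest nonnegative integer $t$ with $f(x^k+\beta^td^k)\le f(x^k)+\varrho\beta^t\langle\nabla f(x^k),d^k\rangle$; $\alpha_k=\beta^{t_k}$, $x^{k+1}=x^k+\alpha_kd^k$. Choice of $G_k$ (with $e_k=b_1\|\bar\mu_k(x^k-\bar x^k)\|^\sigma$): either $G_k=\nabla^2f(x^k)+(b_2[-\lambda_{\min}(\nabla^2f(x^k))]_++e_k)I$; or, when $f(x)=h(Ax-b)$ with $A\in\mathbb{R}^{m\times n}$, $b\in\mathbb{R}^m$, $h$ twice continuously differentiable and separable, $G_k=\nabla^2f(x^k)+b_2[-\lambda_{\min}(\nabla^2h(Ax^k-b))]_+A^\top A+e_kI$ or $G_k=A^\top[\nabla^2h(Ax^k-b)]_+A+e_kI$, where $t_+=\max\{t,0\}$ and $[D]_+$ replaces the negative diagonal entries of the diagonal matrix $D$ by $0$. In all cases $G_k\succeq e_kI$. *)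

theory Defs
  imports "HOL-Analysis.Analysis"
begin

definition supp_vec :: "real^'n \<Rightarrow> 'n set" where
  "supp_vec x = {i. x $ i \<noteq> 0}"

definition l0 :: "real^'n \<Rightarrow> real" where
  "l0 x = real (card (supp_vec x))"

definition box_set :: "real^'n \<Rightarrow> real^'n \<Rightarrow> (real^'n) set" where
  "box_set l u = {x. \<forall>i. l $ i \<le> x $ i \<and> x $ i \<le> u $ i}"

definition ind :: "'a set \<Rightarrow> 'a \<Rightarrow> ereal" where
  "ind C x = (if x \<in> C then 0 else \<infinity>)"

definition gfun :: "real^'n^'p \<Rightarrow> real \<Rightarrow> real \<Rightarrow> real^'n \<Rightarrow> real^'n \<Rightarrow> real^'n \<Rightarrow> ereal" where
  "gfun B lam1 lam2 l u x = ereal (lam1 * l0 (B *v x) + lam2 * l0 x) + ind (box_set l u) x"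

definition prox :: "real \<Rightarrow> ('a::real_normed_vector \<Rightarrow> ereal) \<Rightarrow> 'a \<Rightarrow> 'a set" where
  "prox mu g z = {x. \<forall>y. ereal (1 / (2 * mu) * (norm (x - z))\<^sup>2) + g x
                          \<le> ereal (1 / (2 * mu) * (norm (y - z))\<^sup>2) + g y}"

definition Pi_set :: "real^'n^'p \<Rightarrow> real^'n \<Rightarrow> real^'n \<Rightarrow> real^'n \<Rightarrow> (real^'n) set" where
  "Pi_set B l u z = {x \<in> box_set l u. supp_vec x \<subseteq> supp_vec z \<and> supp_vec (B *v x) \<subseteq> supp_vec (B *v z)}"

definition csubdiff :: "('a::real_inner \<Rightarrow> ereal) \<Rightarrow> 'a \<Rightarrow> 'a set" where
  "csubdiff phi y = {v. \<bar>phi y\<bar> \<noteq> \<infinity> \<and> (\<forall>z. phi y + ereal (v \<bullet> (z - y)) \<le> phi z)}"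

definition dist0 :: "'a::real_normed_vector set \<Rightarrow> ereal" where
  "dist0 S = (if S = {} then \<infinity> else ereal (infdist 0 S))"

definition lambda_min :: "real^'n^'n \<Rightarrow> real" where
  "lambda_min M = Min {c. \<exists>v. v \<noteq> 0 \<and> M *v v = c *s v}"

definition diag_mat :: "real^'n \<Rightarrow> real^'n^'n" where
  "diag_mat d = (\<chi> i j. if i = j then d $ i else 0)"

definition diag_pos :: "real^'n \<Rightarrow> real^'n^'n" where
  "diag_pos d = diag_mat (\<chi> i. max (d $ i) 0)"

definition Theta :: "real \<Rightarrow> real^'n \<Rightarrow> real^'n^'n \<Rightarrow> real^'n \<Rightarrow> (real^'n) set \<Rightarrow> real^'n \<Rightarrow> ereal" where
  "Theta fx gx G x P y = ereal (fx + gx \<bullet> (y - x) + 1/2 * ((y - x) \<bullet> (G *v (y - x)))) + ind P y"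

end

theory Submission
  imports Defs
begin

text \<open>Under the switch condition the proximal gradient point \<open>xbar\<close> is the projection of
  \<open>x - gf x /\<^sub>R mub\<close> onto the polyhedron \<open>Pi_k\<close>, and \<open>G_k\<close> is a positive semidefinite matrix
  plus \<open>e_k I\<close>, so \<open>Theta_k\<close> is a strongly convex quadratic restricted to a convex set.
  (i) At the unique minimiser of \<open>Theta_k\<close> the projected Newton map has a fixed point and the
  subgradient it produces vanishes, while \<open>Theta_k\<close> lies strictly below \<open>Theta_k x\<close> because
  \<open>x\<close> is not stationary; continuity carries both facts to a neighbourhood.
  (ii) \<open>Theta_k y \<le> Theta_k x\<close> gives \<open>gf x \<bullet> d \<le> - e_k/2 * norm d ^ 2\<close> for \<open>d = y - x\<close>, and the
  descent lemma then accepts every step \<open>beta ^ t \<le> (1 - rho) e_k / L1\<close>.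
  (iii) The projection is nonexpansive, so \<open>norm (R_k y)\<close> is bounded by every subgradient of
  \<open>Theta_k\<close> at \<open>y\<close>.\<close>

section \<open>Positive semidefinite matrices and the smallest eigenvalue\<close>

lemma inner_matrix_vector_transpose:
  fixes M :: "real^'n^'m"
  shows "(M *v u) \<bullet> v = u \<bullet> (transpose M *v v)"
  by (metis dot_lmul_matrix inner_commute transpose_matrix_vector)

lemma transpose_add: "transpose (A + B) = transpose A + transpose B"
  by (simp add: transpose_def vec_eq_iff)

lemma transpose_diff: "transpose (A - B) = transpose A - transpose B"
  by (simp add: transpose_def vec_eq_iff)

lemma matrix_add_rdistrib: "(A + B) ** C = A ** C + B ** (C :: 'a::semiring_1^_^_)"
  by (simp add: matrix_matrix_mult_def vec_eq_iff sum.distrib distrib_right)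

lemma scaleR_mat_one_mult [simp]: "(c *\<^sub>R mat 1) *v v = c *\<^sub>R (v :: real^'n)"
  by (simp add: scaleR_matrix_vector_assoc[symmetric])

definition pos_semidef :: "real^'n^'n \<Rightarrow> bool" where
  "pos_semidef M \<longleftrightarrow> transpose M = M \<and> (\<forall>v. 0 \<le> v \<bullet> (M *v v))"

lemma pos_semidef_symmetric: "pos_semidef M \<Longrightarrow> transpose M = M"
  by (simp add: pos_semidef_def)

lemma pos_semidef_add: "pos_semidef M \<Longrightarrow> pos_semidef N \<Longrightarrow> pos_semidef (M + N)"
  by (simp add: pos_semidef_def transpose_add matrix_vector_mult_add_rdistrib inner_add_right add_nonneg_nonneg)

lemma pos_semidef_scaleR_id: "0 \<le> c \<Longrightarrow> pos_semidef (c *\<^sub>R mat 1)"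
  by (simp add: pos_semidef_def transpose_scalar)

lemma inner_congruence_mult:
  fixes A :: "real^'n^'m"
  shows "v \<bullet> ((transpose A ** D ** A) *v w) = (A *v v) \<bullet> (D *v (A *v w))"
  by (simp add: matrix_vector_mul_assoc[symmetric] inner_matrix_vector_transpose[of A, symmetric]
      del: transpose_matrix_vector)

lemma pos_semidef_congruence:
  fixes A :: "real^'n^'m"
  assumes "pos_semidef D"
  shows "pos_semidef (transpose A ** D ** A)"
  using assms by (simp add: pos_semidef_def inner_congruence_mult matrix_transpose_mul matrix_mul_assoc)

lemma diag_mat_mult: "diag_mat d *v w = (\<chi> i. d $ i * w $ i)"
proof -
  have "(\<Sum>j\<in>UNIV. (if i = j then d $ i else 0) * w $ j) = d $ i * w $ i" for i
    by (simp add: if_distrib[where f="\<lambda>a. a * _"] cong: if_cong)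
  then show ?thesis by (simp add: diag_mat_def matrix_vector_mult_def vec_eq_iff)
qed

lemma inner_diag_mat_mult: "v \<bullet> (diag_mat d *v w) = (\<Sum>i\<in>UNIV. d $ i * v $ i * w $ i)"
  by (simp add: diag_mat_mult inner_vec_def mult_ac)

lemma transpose_diag_mat [simp]: "transpose (diag_mat d) = diag_mat d"
  by (simp add: diag_mat_def transpose_def vec_eq_iff)

lemma pos_semidef_diag_mat: "(\<And>i. 0 \<le> d $ i) \<Longrightarrow> pos_semidef (diag_mat d)"
  by (simp add: pos_semidef_def inner_diag_mat_mult sum_nonneg mult.assoc)

lemma quadratic_nonneg_imp_linear_coeff_zero:
  fixes a K :: real
  assumes "\<And>t. 0 \<le> t\<^sup>2 * K - t * a"
  shows "a = 0"
proof -
  define t where "t = a / (\<bar>K\<bar> + 1)"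
  have "t * \<bar>K\<bar> - a = - t"
    unfolding t_def by (simp add: field_simps add_nonneg_pos)
  have "0 \<le> t\<^sup>2 * K - t * a" by (rule assms)
  also have "\<dots> \<le> t\<^sup>2 * \<bar>K\<bar> - t * a"
    by (simp add: mult_left_mono)
  also have "\<dots> = t * (t * \<bar>K\<bar> - a)"
    by (simp add: power2_eq_square algebra_simps)
  also have "\<dots> = - t\<^sup>2"
    using \<open>t * \<bar>K\<bar> - a = - t\<close> by (simp add: power2_eq_square)
  finally have "t = 0" by simp
  moreover have "\<bar>K\<bar> + 1 \<noteq> 0" using abs_ge_zero[of K] by linarith
  ultimately show ?thesis by (simp add: t_def)
qed

lemma pos_semidef_form_eq_zero:
  assumes "pos_semidef N" and "v \<bullet> (N *v v) = 0"
  shows "N *v v = 0"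
proof -
  define w where "w = N *v v"
  define K where "K = w \<bullet> (N *v w)"
  have "0 \<le> t\<^sup>2 * K - t * (2 * (w \<bullet> w))" for t
  proof -
    have sym: "v \<bullet> (N *v w) = w \<bullet> w"
      using assms(1) unfolding pos_semidef_def w_def
      by (metis inner_commute inner_matrix_vector_transpose)
    have "0 \<le> (v - t *\<^sub>R w) \<bullet> (N *v (v - t *\<^sub>R w))"
      using assms(1) unfolding pos_semidef_def by blast
    also have "\<dots> = t\<^sup>2 * K - t * (2 * (w \<bullet> w))"
      using assms(2) sym
      by (simp add: K_def w_def[symmetric] matrix_vector_mult_diff_distrib matrix_vector_mult_scaleR
          inner_diff_left inner_diff_right inner_commute[of w v] power2_eq_square algebra_simps)
    finally show ?thesis .
  qed
  then have "2 * (w \<bullet> w) = 0"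
    by (rule quadratic_nonneg_imp_linear_coeff_zero)
  then show ?thesis unfolding w_def by simp
qed

lemma finite_eigenvalues_symmetric:
  fixes M :: "real^'n^'n"
  assumes "transpose M = M"
  shows "finite {c. \<exists>v. v \<noteq> 0 \<and> M *v v = c *s v}" (is "finite ?S")
proof -
  obtain ev where ev: "\<And>c. c \<in> ?S \<Longrightarrow> ev c \<noteq> 0 \<and> M *v ev c = c *s ev c"
    using bchoice[of ?S "\<lambda>c v. v \<noteq> 0 \<and> M *v v = c *s v"] by blast
  have orth: "ev c \<bullet> ev c' = 0" if "c \<in> ?S" "c' \<in> ?S" "c \<noteq> c'" for c c'
  proof -
    have "c * (ev c \<bullet> ev c') = (M *v ev c) \<bullet> ev c'"
      using ev[OF that(1)] by (simp add: scalar_mult_eq_scaleR)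
    also have "\<dots> = ev c \<bullet> (M *v ev c')"
      using assms by (simp add: inner_matrix_vector_transpose del: transpose_matrix_vector)
    also have "\<dots> = c' * (ev c \<bullet> ev c')"
      using ev[OF that(2)] by (simp add: scalar_mult_eq_scaleR)
    finally show ?thesis using that(3) by simp
  qed
  have "inj_on ev ?S"
  proof (rule inj_onI, rule ccontr)
    fix c c' assume "c \<in> ?S" "c' \<in> ?S" "ev c = ev c'" "c \<noteq> c'"
    then show False using orth[of c c'] ev[of c] by simp
  qed
  moreover have "independent (ev ` ?S)"
  proof (rule pairwise_orthogonal_independent)
    show "pairwise orthogonal (ev ` ?S)"
      unfolding pairwise_def orthogonal_def using orth by fastforce
    show "0 \<notin> ev ` ?S"
      using ev by force
  qed
  ultimately show ?thesis
    using finiteI_independent finite_imageD by blast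
qed

text \<open>The minimum of the Rayleigh quotient is attained on the unit sphere; the quadratic form
  shifted by that minimum is positive semidefinite and vanishes at a minimiser, which is
  therefore an eigenvector.\<close>
lemma lambda_min_le_quadratic_form:
  fixes M :: "real^'n^'n"
  assumes "transpose M = M"
  shows "lambda_min M * (norm v)\<^sup>2 \<le> v \<bullet> (M *v v)"
proof -
  have "continuous_on (sphere 0 1) (\<lambda>v::real^'n. v \<bullet> (M *v v))"
    by (auto intro!: continuous_intros)
  moreover have "sphere (0::real^'n) 1 \<noteq> {}" by simp
  ultimately obtain v0 where v0: "v0 \<in> sphere 0 1"
    and v0_min: "\<And>w. w \<in> sphere 0 1 \<Longrightarrow> v0 \<bullet> (M *v v0) \<le> w \<bullet> (M *v w)"
    using continuous_attains_inf[OF compact_sphere] by blast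
  define c0 where "c0 = v0 \<bullet> (M *v v0)"
  have rayleigh: "c0 * (norm w)\<^sup>2 \<le> w \<bullet> (M *v w)" for w
  proof (cases "w = 0")
    case False
    then have "c0 \<le> (w /\<^sub>R norm w) \<bullet> (M *v (w /\<^sub>R norm w))"
      unfolding c0_def by (intro v0_min) simp
    also have "\<dots> = (w \<bullet> (M *v w)) / (norm w)\<^sup>2"
      by (simp add: matrix_vector_mult_scaleR power2_eq_square divide_inverse)
    finally show ?thesis using False by (simp add: field_simps)
  qed simp
  have "pos_semidef (M - c0 *\<^sub>R mat 1)"
    using assms rayleigh
    by (simp add: pos_semidef_def transpose_scalar transpose_diff matrix_vector_mult_diff_rdistrib
        inner_diff_right power2_norm_eq_inner)
  moreover have "v0 \<bullet> ((M - c0 *\<^sub>R mat 1) *v v0) = 0"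
    using v0 by (simp add: c0_def matrix_vector_mult_diff_rdistrib inner_diff_right norm_eq_1)
  ultimately have "M *v v0 = c0 *s v0"
    by (auto dest: pos_semidef_form_eq_zero simp: matrix_vector_mult_diff_rdistrib scalar_mult_eq_scaleR)
  then have "lambda_min M \<le> c0"
    unfolding lambda_min_def using v0 finite_eigenvalues_symmetric[OF assms]
    by (intro Min_le) (auto intro!: exI[of _ v0])
  then show ?thesis
    using rayleigh[of v] by (meson mult_right_mono order_trans zero_le_power2)
qed

lemma pos_semidef_shift_lambda_min:
  assumes "transpose M = M" and "- lambda_min M \<le> c"
  shows "pos_semidef (M + c *\<^sub>R mat 1)"
proof -
  have "0 \<le> v \<bullet> (M *v v) + c * (v \<bullet> v)" for v
    using lambda_min_le_quadratic_form[OF assms(1), of v] assms(2)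
      mult_right_mono[OF assms(2), of "(norm v)\<^sup>2"]
    by (simp add: power2_norm_eq_inner)
  with assms(1) show ?thesis
    by (simp add: pos_semidef_def transpose_add transpose_scalar matrix_vector_mult_add_rdistrib inner_add_right)
qed

section \<open>Symmetry of the Hessian\<close>

lemma has_real_derivative_along_line:
  fixes f :: "'a::real_normed_vector \<Rightarrow> real"
  assumes "(f has_derivative f') (at (p + s *\<^sub>R w))"
  shows "((\<lambda>s. f (p + s *\<^sub>R w)) has_real_derivative f' w) (at s)"
proof -
  have "((\<lambda>s. p + s *\<^sub>R w) has_derivative (\<lambda>h. h *\<^sub>R w)) (at s)"
    by (auto intro!: derivative_eq_intros)
  from has_derivative_compose[OF this assms]
  have "((\<lambda>s. f (p + s *\<^sub>R w)) has_derivative (\<lambda>h. f' (h *\<^sub>R w))) (at s)" .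
  moreover have "(\<lambda>h. f' (h *\<^sub>R w)) = (*) (f' w)"
    using has_derivative_bounded_linear[OF assms] by (simp add: linear_simps fun_eq_iff)
  ultimately show ?thesis by (simp add: has_field_derivative_def)
qed

lemma continuous_at_eq_if_close_points_agree:
  fixes f g :: "'a::metric_space \<Rightarrow> 'b::metric_space"
  assumes "isCont f x" "isCont g x"
    and close: "\<And>r. r > 0 \<Longrightarrow> \<exists>p q. dist p x < r \<and> dist q x < r \<and> f p = g q"
  shows "f x = g x"
proof (rule ccontr)
  assume "f x \<noteq> g x"
  then have \<epsilon>: "dist (f x) (g x) / 2 > 0" by simp
  obtain r1 where "r1 > 0" and r1: "\<And>p. dist p x < r1 \<Longrightarrow> dist (f p) (f x) < dist (f x) (g x) / 2"
    using assms(1) \<epsilon> unfolding continuous_at_eps_delta by blast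
  obtain r2 where "r2 > 0" and r2: "\<And>q. dist q x < r2 \<Longrightarrow> dist (g q) (g x) < dist (f x) (g x) / 2"
    using assms(2) \<epsilon> unfolding continuous_at_eps_delta by blast
  obtain p q where "dist p x < min r1 r2" "dist q x < min r1 r2" "f p = g q"
    using close[of "min r1 r2"] \<open>r1 > 0\<close> \<open>r2 > 0\<close> by auto
  then have "dist (f x) (g x) < dist (f x) (g x)"
    using r1[of p] r2[of q] dist_triangle3[of "f x" "g x" "f p"] by (simp add: dist_commute)
  then show False by simp
qed

lemma second_difference_mean_value:
  fixes f :: "real^'n \<Rightarrow> real" and gf :: "real^'n \<Rightarrow> real^'n" and Hf :: "real^'n \<Rightarrow> real^'n^'n"
  assumes d1: "\<forall>z. (f has_derivative (\<lambda>h. gf z \<bullet> h)) (at z)"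
    and d2: "\<forall>z. (gf has_derivative (\<lambda>h. Hf z *v h)) (at z)"
    and h: "h > 0"
  obtains a b where "0 < a" "a < h" "0 < b" "b < h"
    "f (x + h *\<^sub>R u + h *\<^sub>R v) - f (x + h *\<^sub>R u) - f (x + h *\<^sub>R v) + f x
       = h\<^sup>2 * ((Hf (x + a *\<^sub>R u + b *\<^sub>R v) *v v) \<bullet> u)"
proof -
  define \<phi> where "\<phi> s = f (x + h *\<^sub>R v + s *\<^sub>R u) - f (x + s *\<^sub>R u)" for s
  have "(\<phi> has_real_derivative gf (x + h *\<^sub>R v + s *\<^sub>R u) \<bullet> u - gf (x + s *\<^sub>R u) \<bullet> u) (at s)" for s
    unfolding \<phi>_def by (intro DERIV_diff has_real_derivative_along_line d1[rule_format])
  then obtain a where a: "0 < a" "a < h"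
     "\<phi> h - \<phi> 0 = h * (gf (x + h *\<^sub>R v + a *\<^sub>R u) \<bullet> u - gf (x + a *\<^sub>R u) \<bullet> u)"
    using MVT2[OF h, of \<phi> "\<lambda>s. gf (x + h *\<^sub>R v + s *\<^sub>R u) \<bullet> u - gf (x + s *\<^sub>R u) \<bullet> u"] by auto
  define \<psi> where "\<psi> t = gf (x + a *\<^sub>R u + t *\<^sub>R v) \<bullet> u" for t
  have "((\<lambda>z. gf z \<bullet> u) has_derivative (\<lambda>w. (Hf z *v w) \<bullet> u)) (at z)" for z
    using d2 by (auto intro!: derivative_eq_intros)
  then have "(\<psi> has_real_derivative (Hf (x + a *\<^sub>R u + t *\<^sub>R v) *v v) \<bullet> u) (at t)" for t
    unfolding \<psi>_def by (rule has_real_derivative_along_line)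
  then obtain b where b: "0 < b" "b < h" "\<psi> h - \<psi> 0 = h * ((Hf (x + a *\<^sub>R u + b *\<^sub>R v) *v v) \<bullet> u)"
    using MVT2[OF h, of \<psi> "\<lambda>t. (Hf (x + a *\<^sub>R u + t *\<^sub>R v) *v v) \<bullet> u"] by auto
  have "f (x + h *\<^sub>R u + h *\<^sub>R v) - f (x + h *\<^sub>R u) - f (x + h *\<^sub>R v) + f x = \<phi> h - \<phi> 0"
    unfolding \<phi>_def by (simp add: algebra_simps)
  also have "\<dots> = h * (\<psi> h - \<psi> 0)"
    using a(3) unfolding \<psi>_def by (simp add: algebra_simps)
  finally show ?thesis
    using that a b by (simp add: power2_eq_square)
qed

lemma bounded_linear_matrix_vector_mult_left:
  "bounded_linear (\<lambda>M::real^'n^'m. M *v v)"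
  by (rule linear_conv_bounded_linear[THEN iffD1], rule linearI)
     (auto simp: matrix_vector_mult_add_rdistrib scaleR_matrix_vector_assoc)

text \<open>The second difference of \<open>f\<close> with steps \<open>h u\<close>, \<open>h v\<close> is \<open>h\<^sup>2\<close> times either mixed
  second derivative at a point near \<open>x\<close>.\<close>
lemma second_difference_swap_near:
  fixes f :: "real^'n \<Rightarrow> real" and gf :: "real^'n \<Rightarrow> real^'n" and Hf :: "real^'n \<Rightarrow> real^'n^'n"
  assumes d1: "\<forall>z. (f has_derivative (\<lambda>h. gf z \<bullet> h)) (at z)"
    and d2: "\<forall>z. (gf has_derivative (\<lambda>h. Hf z *v h)) (at z)"
    and "r > 0"
  shows "\<exists>p q. dist p x < r \<and> dist q x < r \<and> (Hf p *v v) \<bullet> u = (Hf q *v u) \<bullet> v"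
proof -
  define h where "h = r / (norm u + norm v + 1)"
  have "h > 0" using \<open>r > 0\<close> by (simp add: h_def add_nonneg_pos)
  have near: "dist (x + a *\<^sub>R p + b *\<^sub>R w) x < r"
    if "0 < a" "a < h" "0 < b" "b < h" "norm p + norm w = norm u + norm v" for a b p w
  proof -
    have "dist (x + a *\<^sub>R p + b *\<^sub>R w) x \<le> a * norm p + b * norm w"
      using that norm_triangle_ineq[of "a *\<^sub>R p" "b *\<^sub>R w"] by (simp add: dist_norm)
    also have "\<dots> \<le> h * norm p + h * norm w"
      using that by (intro add_mono mult_right_mono) auto
    also have "\<dots> < h * (norm u + norm v + 1)"
      using that \<open>h > 0\<close> by (simp add: distrib_left[symmetric])
    also have "\<dots> = r"
      unfolding h_def by (simp add: add_nonneg_pos order.strict_implies_not_eq[symmetric])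
    finally show ?thesis .
  qed
  obtain a b where ab: "0 < a" "a < h" "0 < b" "b < h"
    "f (x + h *\<^sub>R u + h *\<^sub>R v) - f (x + h *\<^sub>R u) - f (x + h *\<^sub>R v) + f x
       = h\<^sup>2 * ((Hf (x + a *\<^sub>R u + b *\<^sub>R v) *v v) \<bullet> u)"
    using second_difference_mean_value[OF d1 d2 \<open>h > 0\<close>] .
  obtain a' b' where ab': "0 < a'" "a' < h" "0 < b'" "b' < h"
    "f (x + h *\<^sub>R v + h *\<^sub>R u) - f (x + h *\<^sub>R v) - f (x + h *\<^sub>R u) + f x
       = h\<^sup>2 * ((Hf (x + a' *\<^sub>R v + b' *\<^sub>R u) *v u) \<bullet> v)"
    using second_difference_mean_value[OF d1 d2 \<open>h > 0\<close>] .
  show ?thesis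
  proof (intro exI conjI)
    show "dist (x + a *\<^sub>R u + b *\<^sub>R v) x < r"
      by (rule near[OF ab(1-4) refl])
    show "dist (x + a' *\<^sub>R v + b' *\<^sub>R u) x < r"
      by (rule near[OF ab'(1-4) add.commute])
    show "(Hf (x + a *\<^sub>R u + b *\<^sub>R v) *v v) \<bullet> u = (Hf (x + a' *\<^sub>R v + b' *\<^sub>R u) *v u) \<bullet> v"
      using ab(5) ab'(5) \<open>h > 0\<close> by (simp add: algebra_simps)
  qed
qed

lemma hessian_symmetric:
  fixes f :: "real^'n \<Rightarrow> real" and gf :: "real^'n \<Rightarrow> real^'n" and Hf :: "real^'n \<Rightarrow> real^'n^'n"
  assumes d1: "\<forall>z. (f has_derivative (\<lambda>h. gf z \<bullet> h)) (at z)"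
    and d2: "\<forall>z. (gf has_derivative (\<lambda>h. Hf z *v h)) (at z)"
    and cont: "continuous_on UNIV Hf"
  shows "transpose (Hf x) = Hf x"
proof -
  have mixed: "(Hf x *v v) \<bullet> u = (Hf x *v u) \<bullet> v" for u v
  proof (rule continuous_at_eq_if_close_points_agree[where f = "\<lambda>p. (Hf p *v v) \<bullet> u"])
    show "isCont (\<lambda>p. (Hf p *v v) \<bullet> u) x" "isCont (\<lambda>p. (Hf p *v u) \<bullet> v) x"
      using cont by (auto intro!: continuous_intros bounded_linear.isCont[OF bounded_linear_matrix_vector_mult_left]
          simp: continuous_on_eq_continuous_at)
  qed (rule second_difference_swap_near[OF d1 d2])
  have "(transpose (Hf x) *v u) \<bullet> v = (Hf x *v u) \<bullet> v" for u v
    by (metis inner_commute inner_matrix_vector_transpose mixed)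
  then have "transpose (Hf x) *v u = Hf x *v u" for u
    using vector_eq_rdot by blast
  then show ?thesis by (simp add: matrix_eq)
qed

section \<open>The Newton matrix is positive semidefinite plus \<open>e_k I\<close>\<close>

lemma has_derivative_separable_component:
  fixes A :: "real^'n^'m"
  assumes "(h has_real_derivative h' ((A *v z - bb) $ i)) (at ((A *v z - bb) $ i))"
  shows "((\<lambda>z. h ((A *v z - bb) $ i)) has_derivative (\<lambda>w. h' ((A *v z - bb) $ i) * (A *v w) $ i)) (at z)"
proof -
  have "((\<lambda>z. (A *v z - bb) $ i) has_derivative (\<lambda>w. (A *v w) $ i)) (at z)"
    by (auto intro!: derivative_eq_intros bounded_linear.has_derivative[OF bounded_linear_vec_nth]
        bounded_linear.has_derivative[OF matrix_vector_mul_bounded_linear])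
  from has_derivative_compose[OF this assms[unfolded has_field_derivative_def]] show ?thesis .
qed

lemma hessian_of_separable_composition:
  fixes A :: "real^'n^'m" and f :: "real^'n \<Rightarrow> real"
  assumes f_eq: "\<forall>z. f z = (\<Sum>i\<in>UNIV. hs i ((A *v z - bb) $ i))"
    and hs_deriv: "\<forall>i t. (hs i has_real_derivative hs1 i t) (at t) \<and> (hs1 i has_real_derivative hs2 i t) (at t)"
    and d1: "\<forall>z. (f has_derivative (\<lambda>h. gf z \<bullet> h)) (at z)"
    and d2: "\<forall>z. (gf has_derivative (\<lambda>h. Hf z *v h)) (at z)"
  shows "Hf x = transpose A ** diag_mat (\<chi> i. hs2 i ((A *v x - bb) $ i)) ** A"
proof -
  let ?D = "diag_mat (\<chi> i. hs2 i ((A *v x - bb) $ i))"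
  have f_deriv: "(f has_derivative (\<lambda>w. \<Sum>i\<in>UNIV. hs1 i ((A *v z - bb) $ i) * (A *v w) $ i)) (at z)" for z
    unfolding f_eq[rule_format, abs_def] using hs_deriv
    by (intro has_derivative_sum has_derivative_separable_component) auto
  have gf_eq: "gf z \<bullet> v = (\<Sum>i\<in>UNIV. hs1 i ((A *v z - bb) $ i) * (A *v v) $ i)" for z v
    by (rule fun_cong[OF has_derivative_unique[OF d1[rule_format] f_deriv]])
  have gf_deriv: "((\<lambda>z. gf z \<bullet> v) has_derivative (\<lambda>h. (Hf x *v h) \<bullet> v)) (at x)" for v
    using d2 by (auto intro!: derivative_eq_intros)
  have hess_deriv: "((\<lambda>z. gf z \<bullet> v) has_derivative
      (\<lambda>h. \<Sum>i\<in>UNIV. hs2 i ((A *v x - bb) $ i) * (A *v h) $ i * (A *v v) $ i)) (at x)" for v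
    unfolding gf_eq using hs_deriv
    by (intro has_derivative_sum has_derivative_mult_left has_derivative_separable_component) auto
  have "(Hf x *v h) \<bullet> v = (\<Sum>i\<in>UNIV. hs2 i ((A *v x - bb) $ i) * (A *v h) $ i * (A *v v) $ i)" for h v
    by (rule fun_cong[OF has_derivative_unique[OF gf_deriv hess_deriv]])
  also have "\<dots> h v = ((transpose A ** ?D ** A) *v h) \<bullet> v" for h v
    by (simp add: inner_commute[of _ v] inner_congruence_mult inner_diag_mat_mult mult_ac)
  finally have "Hf x *v h = (transpose A ** ?D ** A) *v h" for h
    using vector_eq_rdot by blast
  then show ?thesis
    by (simp add: matrix_eq)
qed

lemma pos_semidef_plus_id_coercive:
  "pos_semidef M \<Longrightarrow> e * (norm v)\<^sup>2 \<le> v \<bullet> ((M + e *\<^sub>R mat 1) *v v)"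
  by (simp add: pos_semidef_def matrix_vector_mult_add_rdistrib inner_add_right power2_norm_eq_inner)

lemma pos_semidef_congruence_diag_shift:
  fixes A :: "real^'n^'m"
  assumes "- lambda_min (diag_mat d) \<le> c"
  shows "pos_semidef (transpose A ** diag_mat d ** A + c *\<^sub>R (transpose A ** A))"
proof -
  have "transpose A ** diag_mat d ** A + c *\<^sub>R (transpose A ** A)
      = transpose A ** (diag_mat d + c *\<^sub>R mat 1) ** A"
    by (simp add: matrix_add_ldistrib matrix_add_rdistrib matrix_scalar_ac scalar_matrix_assoc)
  moreover have "pos_semidef (diag_mat d + c *\<^sub>R mat 1)"
    using assms by (intro pos_semidef_shift_lambda_min transpose_diag_mat)
  ultimately show ?thesis
    by (simp add: pos_semidef_congruence)
qed

lemma newton_matrix_eq_pos_semidef_plus_id: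
  fixes f :: "real^'n \<Rightarrow> real" and gf :: "real^'n \<Rightarrow> real^'n" and Hf :: "real^'n \<Rightarrow> real^'n^'n"
    and A :: "real^'n^'m" and bb :: "real^'m" and x :: "real^'n" and hs hs1 hs2 :: "'m \<Rightarrow> real \<Rightarrow> real"
  defines "hdiag \<equiv> (\<chi> i. hs2 i ((A *v x - bb) $ i))"
  assumes d1: "\<forall>z. (f has_derivative (\<lambda>h. gf z \<bullet> h)) (at z)"
    and d2: "\<forall>z. (gf has_derivative (\<lambda>h. Hf z *v h)) (at z)"
    and Hf_cont: "continuous_on UNIV Hf"
    and b2: "b2 \<ge> 1"
    and G_choice:
      "G = Hf x + (b2 * max (- lambda_min (Hf x)) 0 + e) *\<^sub>R mat 1
       \<or> ((\<forall>i t. (hs i has_real_derivative hs1 i t) (at t) \<and> (hs1 i has_real_derivative hs2 i t) (at t))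
          \<and> (\<forall>i. continuous_on UNIV (hs2 i))
          \<and> (\<forall>z. f z = (\<Sum>i\<in>UNIV. hs i ((A *v z - bb) $ i)))
          \<and> (G = Hf x + (b2 * max (- lambda_min (diag_mat hdiag)) 0) *\<^sub>R (transpose A ** A) + e *\<^sub>R mat 1
             \<or> G = transpose A ** diag_pos hdiag ** A + e *\<^sub>R mat 1))"
  shows "\<exists>M. pos_semidef M \<and> G = M + e *\<^sub>R mat 1"
proof -
  have shift: "- lambda_min M \<le> b2 * max (- lambda_min M) 0" for M :: "real^'k^'k"
    using mult_right_mono[OF b2, of "max (- lambda_min M) 0"] by linarith
  from G_choice consider
      (hessian) "G = Hf x + (b2 * max (- lambda_min (Hf x)) 0 + e) *\<^sub>R mat 1"
    | (gauss_newton) "G = Hf x + (b2 * max (- lambda_min (diag_mat hdiag)) 0) *\<^sub>R (transpose A ** A) + e *\<^sub>R mat 1"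
        "\<forall>i t. (hs i has_real_derivative hs1 i t) (at t) \<and> (hs1 i has_real_derivative hs2 i t) (at t)"
        "\<forall>z. f z = (\<Sum>i\<in>UNIV. hs i ((A *v z - bb) $ i))"
    | (positive_part) "G = transpose A ** diag_pos hdiag ** A + e *\<^sub>R mat 1"
    by blast
  then show ?thesis
  proof cases
    case hessian
    have "pos_semidef (Hf x + (b2 * max (- lambda_min (Hf x)) 0) *\<^sub>R mat 1)"
      by (intro pos_semidef_shift_lambda_min hessian_symmetric[OF d1 d2 Hf_cont] shift)
    then show ?thesis
      using hessian by (intro exI[of _ "Hf x + (b2 * max (- lambda_min (Hf x)) 0) *\<^sub>R mat 1"])
        (simp add: scaleR_add_left add.assoc)
  next
    case gauss_newton
    have "pos_semidef (Hf x + (b2 * max (- lambda_min (diag_mat hdiag)) 0) *\<^sub>R (transpose A ** A))"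
      unfolding hessian_of_separable_composition[OF gauss_newton(3,2) d1 d2] hdiag_def[symmetric]
      by (intro pos_semidef_congruence_diag_shift shift)
    then show ?thesis
      using gauss_newton(1) by blast
  next
    case positive_part
    have "pos_semidef (diag_pos hdiag)"
      unfolding diag_pos_def by (rule pos_semidef_diag_mat) simp
    then show ?thesis
      using positive_part
      by (intro exI[of _ "transpose A ** diag_pos hdiag ** A"] conjI pos_semidef_congruence)
  qed
qed

section \<open>The quadratic model on a convex set\<close>

definition normal_cone :: "'a::real_inner set \<Rightarrow> 'a \<Rightarrow> 'a set" where
  "normal_cone S y = {n. \<forall>z\<in>S. n \<bullet> (z - y) \<le> 0}"

lemma closest_point_normal_cone:
  "convex S \<Longrightarrow> closed S \<Longrightarrow> a - closest_point S a \<in> normal_cone S (closest_point S a)"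
  by (simp add: normal_cone_def closest_point_dot)

lemma closest_point_add_normal:
  fixes S :: "'a::{real_inner,heine_borel} set"
  assumes "convex S" "closed S" "y \<in> S" and n: "n \<in> normal_cone S y" and "c \<ge> 0"
  shows "closest_point S (y + c *\<^sub>R n) = y"
proof -
  have "dist (y + c *\<^sub>R n) y \<le> dist (y + c *\<^sub>R n) z" if "z \<in> S" for z
  proof -
    have "c * (n \<bullet> (z - y)) \<le> 0"
      using n that \<open>c \<ge> 0\<close> by (simp add: normal_cone_def mult_nonneg_nonpos)
    moreover have "(dist (y + c *\<^sub>R n) z)\<^sup>2
        = (c *\<^sub>R n) \<bullet> (c *\<^sub>R n) - 2 * (c * (n \<bullet> (z - y))) + (y - z) \<bullet> (y - z)"
      by (simp add: dist_norm power2_norm_eq_inner inner_add_left inner_add_right inner_diff_right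
          inner_commute algebra_simps)
    moreover have "(dist (y + c *\<^sub>R n) y)\<^sup>2 = (c *\<^sub>R n) \<bullet> (c *\<^sub>R n)"
      unfolding dist_norm power2_norm_eq_inner by simp
    ultimately have "(dist (y + c *\<^sub>R n) y)\<^sup>2 \<le> (dist (y + c *\<^sub>R n) z)\<^sup>2"
      using inner_ge_zero[of "y - z"] by linarith
    then show ?thesis
      by (simp add: power2_le_iff_abs_le)
  qed
  then show ?thesis
    using closest_point_unique[OF assms(1-3)] by metis
qed

definition quad_model :: "real \<Rightarrow> real^'n \<Rightarrow> real^'n^'n \<Rightarrow> real^'n \<Rightarrow> real^'n \<Rightarrow> real" where
  "quad_model fx gx G x y = fx + gx \<bullet> (y - x) + 1/2 * ((y - x) \<bullet> (G *v (y - x)))"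

lemma Theta_eq_quad_model:
  "Theta fx gx G x P y = (if y \<in> P then ereal (quad_model fx gx G x y) else \<infinity>)"
  by (simp add: Theta_def ind_def quad_model_def)

lemma continuous_on_quad_model: "continuous_on S (quad_model fx gx G x)"
  unfolding quad_model_def
  by (auto intro!: continuous_intros bounded_linear.continuous_on[OF matrix_vector_mul_bounded_linear])

lemma quad_model_expand:
  assumes "transpose G = G"
  shows "quad_model fx gx G x z
    = quad_model fx gx G x y + (G *v (y - x) + gx) \<bullet> (z - y) + 1/2 * ((z - y) \<bullet> (G *v (z - y)))"
proof -
  have "(y - x) \<bullet> (G *v (z - y)) = (G *v (y - x)) \<bullet> (z - y)"
    using assms by (simp add: inner_matrix_vector_transpose del: transpose_matrix_vector)
  moreover have "z - x = (y - x) + (z - y)" by simp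
  ultimately show ?thesis
    unfolding quad_model_def
    by (simp only:) (simp add: matrix_vector_right_distrib inner_add_left inner_add_right inner_commute algebra_simps)
qed

lemma nonpos_if_le_small_multiples:
  fixes a c :: real
  assumes "\<And>t. 0 < t \<Longrightarrow> t \<le> 1 \<Longrightarrow> a \<le> t * c"
  shows "a \<le> 0"
proof (rule field_le_epsilon)
  fix \<epsilon> :: real assume "0 < \<epsilon>"
  define t where "t = min 1 (\<epsilon> / (\<bar>c\<bar> + 1))"
  have "0 < t" "t \<le> 1"
    using \<open>0 < \<epsilon>\<close> by (auto simp: t_def add_nonneg_pos)
  then have "a \<le> t * c" by (rule assms)
  also have "\<dots> \<le> t * \<bar>c\<bar>"
    using \<open>0 < t\<close> by (simp add: mult_left_mono)
  also have "\<dots> \<le> \<epsilon> / (\<bar>c\<bar> + 1) * \<bar>c\<bar>"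
    by (intro mult_right_mono) (auto simp: t_def)
  also have "\<dots> \<le> \<epsilon>"
    using \<open>0 < \<epsilon>\<close> by (simp add: field_simps add_nonneg_pos)
  finally show "a \<le> 0 + \<epsilon>" by simp
qed

lemma csubdiff_Theta_imp_normal_cone:
  assumes "transpose G = G" "convex P" and v: "v \<in> csubdiff (Theta fx gx G x P) y"
  shows "y \<in> P" and "v - (G *v (y - x) + gx) \<in> normal_cone P y"
proof -
  let ?q = "quad_model fx gx G x" and ?g = "G *v (y - x) + gx"
  have sub: "Theta fx gx G x P y + ereal (v \<bullet> (z - y)) \<le> Theta fx gx G x P z" for z
    using v by (simp add: csubdiff_def)
  have "\<bar>Theta fx gx G x P y\<bar> \<noteq> \<infinity>"
    using v by (simp add: csubdiff_def)
  then show "y \<in> P"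
    by (cases "y \<in> P") (simp_all add: Theta_eq_quad_model)
  text \<open>Compare with the points \<open>y + t (z - y)\<close> of \<open>P\<close> and let \<open>t\<close> tend to \<open>0\<close>.\<close>
  have "(v - ?g) \<bullet> (z - y) \<le> 0" if "z \<in> P" for z
  proof (rule nonpos_if_le_small_multiples)
    fix t :: real assume "0 < t" "t \<le> 1"
    define Q where "Q = (z - y) \<bullet> (G *v (z - y))"
    have "y + t *\<^sub>R (z - y) \<in> P"
      using convexD_alt[OF \<open>convex P\<close> \<open>y \<in> P\<close> that, of t] \<open>0 < t\<close> \<open>t \<le> 1\<close>
      by (simp add: algebra_simps)
    then have "?q y + v \<bullet> (t *\<^sub>R (z - y)) \<le> ?q (y + t *\<^sub>R (z - y))"
      using sub[of "y + t *\<^sub>R (z - y)"] \<open>y \<in> P\<close> by (simp add: Theta_eq_quad_model)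
    then have "t * (v \<bullet> (z - y)) \<le> t * (?g \<bullet> (z - y)) + t * (t * (1/2 * Q))"
      using quad_model_expand[OF \<open>transpose G = G\<close>, of fx gx x "y + t *\<^sub>R (z - y)" y]
      by (simp add: Q_def matrix_vector_mult_scaleR)
    then have "t * ((v - ?g) \<bullet> (z - y)) \<le> t * (t * (1/2 * Q))"
      by (simp add: inner_diff_left right_diff_distrib)
    then show "(v - ?g) \<bullet> (z - y) \<le> t * (1/2 * Q)"
      using \<open>0 < t\<close> by simp
  qed
  then show "v - ?g \<in> normal_cone P y"
    by (simp add: normal_cone_def)
qed

lemma normal_cone_imp_csubdiff_Theta:
  assumes G: "pos_semidef G" and "y \<in> P" and n: "v - (G *v (y - x) + gx) \<in> normal_cone P y"
  shows "v \<in> csubdiff (Theta fx gx G x P) y"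
proof -
  let ?q = "quad_model fx gx G x" and ?g = "G *v (y - x) + gx"
  have "?q y + v \<bullet> (z - y) \<le> ?q z" if "z \<in> P" for z
  proof -
    have "v \<bullet> (z - y) \<le> ?g \<bullet> (z - y)"
      using n that by (simp add: normal_cone_def inner_diff_left)
    moreover have "0 \<le> (z - y) \<bullet> (G *v (z - y))"
      using G by (simp add: pos_semidef_def)
    ultimately show ?thesis
      using quad_model_expand[OF pos_semidef_symmetric[OF G], of fx gx x z y] by linarith
  qed
  then show ?thesis
    using \<open>y \<in> P\<close> by (auto simp: csubdiff_def Theta_eq_quad_model)
qed

lemma Theta_minimizer_normal_cone:
  assumes "transpose G = G" "convex P" and "y \<in> P"
    and "\<forall>w. Theta fx gx G x P y \<le> Theta fx gx G x P w"
  shows "- (G *v (y - x) + gx) \<in> normal_cone P y"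
proof -
  have "0 \<in> csubdiff (Theta fx gx G x P) y"
    using assms(3,4) by (simp add: csubdiff_def Theta_eq_quad_model)
  then have "0 - (G *v (y - x) + gx) \<in> normal_cone P y"
    by (rule csubdiff_Theta_imp_normal_cone(2)[OF assms(1,2)])
  then show ?thesis by simp
qed

lemma quad_model_attains_min:
  fixes P :: "(real^'n) set"
  assumes coercive: "\<And>v. e * (norm v)\<^sup>2 \<le> v \<bullet> (G *v v)" and "e > 0" and "closed P" "x \<in> P"
  obtains ys where "ys \<in> P" "\<And>z. z \<in> P \<Longrightarrow> quad_model fx gx G x ys \<le> quad_model fx gx G x z"
proof -
  let ?q = "quad_model fx gx G x"
  define R where "R = 2 * norm gx / e + 1"
  define K where "K = P \<inter> cball x R"
  have "R > 0" using \<open>e > 0\<close> by (simp add: R_def add_nonneg_pos)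
  have "compact K" "x \<in> K"
    using \<open>closed P\<close> \<open>x \<in> P\<close> \<open>R > 0\<close> by (auto simp: K_def closed_Int_compact)
  then obtain ys where "ys \<in> K" and ys_min_K: "\<And>z. z \<in> K \<Longrightarrow> ?q ys \<le> ?q z"
    using continuous_attains_inf[OF \<open>compact K\<close> _ continuous_on_quad_model] by blast
  text \<open>Outside the ball the linear term is dominated by the quadratic one.\<close>
  have far: "?q x < ?q z" if "z \<in> P" "z \<notin> K" for z
  proof -
    define r where "r = norm (z - x)"
    have "r > R" using that by (simp add: K_def r_def dist_norm norm_minus_commute)
    have "- (norm gx * r) \<le> gx \<bullet> (z - x)"
      unfolding r_def using Cauchy_Schwarz_ineq2[of gx "z - x"] by linarith
    moreover have "e * r\<^sup>2 \<le> (z - x) \<bullet> (G *v (z - x))"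
      unfolding r_def by (rule coercive)
    moreover have "norm gx * r < e * r / 2 * r"
    proof (rule mult_strict_right_mono)
      show "norm gx < e * r / 2"
        using \<open>r > R\<close> \<open>e > 0\<close> mult_strict_left_mono[OF \<open>r > R\<close> \<open>e > 0\<close>]
        by (simp add: R_def field_simps)
    qed (use \<open>r > R\<close> \<open>R > 0\<close> in simp)
    ultimately show ?thesis
      by (simp add: quad_model_def power2_eq_square)
  qed
  show ?thesis
  proof (rule that)
    show "ys \<in> P" using \<open>ys \<in> K\<close> by (simp add: K_def)
    show "?q ys \<le> ?q z" if "z \<in> P" for z
    proof (cases "z \<in> K")
      case False
      then show ?thesis
        using ys_min_K[OF \<open>x \<in> K\<close>] far[OF that] by simp
    qed (rule ys_min_K)
  qed
qed

lemma Theta_minimizer_unique: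
  assumes G: "pos_semidef G" and coercive: "\<And>v. e * (norm v)\<^sup>2 \<le> v \<bullet> (G *v v)" and "e > 0"
    and "convex P" and "x \<in> P"
    and ys_min: "\<forall>w. Theta fx gx G x P ys \<le> Theta fx gx G x P w"
    and z_min: "\<forall>w. Theta fx gx G x P z \<le> Theta fx gx G x P w"
  shows "z = ys"
proof -
  let ?q = "quad_model fx gx G x"
  have in_P: "y \<in> P" if "\<forall>w. Theta fx gx G x P y \<le> Theta fx gx G x P w" for y
  proof (rule ccontr)
    assume "y \<notin> P"
    then show False
      using that[rule_format, of x] \<open>x \<in> P\<close> by (simp add: Theta_eq_quad_model)
  qed
  have "ys \<in> P" "z \<in> P" using in_P ys_min z_min by auto
  then have "?q z \<le> ?q ys"
    using z_min[rule_format, of ys] by (simp add: Theta_eq_quad_model)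
  moreover have "(- (G *v (ys - x) + gx)) \<bullet> (z - ys) \<le> 0"
    using Theta_minimizer_normal_cone[OF pos_semidef_symmetric[OF G] \<open>convex P\<close> \<open>ys \<in> P\<close> ys_min] \<open>z \<in> P\<close>
    unfolding normal_cone_def by blast
  moreover have "?q z = ?q ys + (G *v (ys - x) + gx) \<bullet> (z - ys) + 1/2 * ((z - ys) \<bullet> (G *v (z - ys)))"
    using pos_semidef_symmetric[OF G] by (rule quad_model_expand)
  ultimately have "e * (norm (z - ys))\<^sup>2 \<le> 0"
    using coercive[of "z - ys"] unfolding inner_minus_left by linarith
  then show "z = ys"
    using \<open>e > 0\<close> by (simp add: mult_le_0_iff)
qed

lemma Theta_unique_minimizer:
  fixes P :: "(real^'n) set"
  assumes G: "pos_semidef G" and coercive: "\<And>v. e * (norm v)\<^sup>2 \<le> v \<bullet> (G *v v)" and "e > 0"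
    and P: "convex P" "closed P" and "x \<in> P"
  obtains ys where "\<And>z. (\<forall>w. Theta fx gx G x P z \<le> Theta fx gx G x P w) \<longleftrightarrow> z = ys"
proof -
  obtain ys where "ys \<in> P" and ys_min: "\<And>z. z \<in> P \<Longrightarrow> quad_model fx gx G x ys \<le> quad_model fx gx G x z"
    using quad_model_attains_min[OF coercive \<open>e > 0\<close> P(2) \<open>x \<in> P\<close>] by blast
  then have "\<forall>w. Theta fx gx G x P ys \<le> Theta fx gx G x P w"
    by (simp add: Theta_eq_quad_model)
  then show ?thesis
    using that Theta_minimizer_unique[OF G coercive \<open>e > 0\<close> P(1) \<open>x \<in> P\<close>] by blast
qed

lemma dist0_le_norm: "v \<in> S \<Longrightarrow> dist0 S \<le> ereal (norm v)"
  using infdist_le[of v S 0] by (auto simp: dist0_def)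

lemma dist0_ge: "(\<And>v. v \<in> S \<Longrightarrow> c \<le> norm v) \<Longrightarrow> ereal c \<le> dist0 S"
  by (auto simp: dist0_def infdist_notempty intro!: cINF_greatest)

text \<open>In the paper's notation \<open>R_k = proj_grad_residual mub (\<lambda>y. G_k (y - x) + gf x) Pi_k\<close> and
  \<open>r_k = proj_grad_residual mub gf Pi_k\<close>.\<close>
definition proj_grad_residual :: "real \<Rightarrow> ('a \<Rightarrow> 'a) \<Rightarrow> 'a set \<Rightarrow> 'a \<Rightarrow> 'a::{real_inner,heine_borel}" where
  "proj_grad_residual mu grad P y = mu *\<^sub>R (y - closest_point P (y - (1 / mu) *\<^sub>R grad y))"

lemma proj_grad_residual_step:
  "mu \<noteq> 0 \<Longrightarrow> y - (1 / mu) *\<^sub>R proj_grad_residual mu grad P y = closest_point P (y - (1 / mu) *\<^sub>R grad y)"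
  by (simp add: proj_grad_residual_def)

lemma norm_proj_grad_residual_le_dist0:
  assumes G: "pos_semidef G" and P: "convex P" "closed P" and "mu > 0"
  shows "ereal (norm (proj_grad_residual mu (\<lambda>y. G *v (y - x) + gx) P y))
    \<le> dist0 (csubdiff (Theta fx gx G x P) y)"
proof (rule dist0_ge)
  fix v assume "v \<in> csubdiff (Theta fx gx G x P) y"
  then have "y \<in> P" and n: "v - (G *v (y - x) + gx) \<in> normal_cone P y"
    using csubdiff_Theta_imp_normal_cone[OF pos_semidef_symmetric[OF G] P(1)] by auto
  let ?w = "y - (1 / mu) *\<^sub>R (G *v (y - x) + gx)"
  have "closest_point P (y + (1 / mu) *\<^sub>R (v - (G *v (y - x) + gx))) = y"
    using closest_point_add_normal[OF P \<open>y \<in> P\<close> n] \<open>mu > 0\<close> by simp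
  moreover have "P \<noteq> {}" using \<open>y \<in> P\<close> by blast
  ultimately have "dist y (closest_point P ?w) \<le> dist (y + (1 / mu) *\<^sub>R (v - (G *v (y - x) + gx))) ?w"
    using closest_point_lipschitz[OF P, of "y + (1 / mu) *\<^sub>R (v - (G *v (y - x) + gx))" ?w] by simp
  also have "\<dots> = norm v / mu"
    using \<open>mu > 0\<close> by (simp add: dist_norm algebra_simps)
  finally have "mu * dist y (closest_point P ?w) \<le> norm v"
    using \<open>mu > 0\<close> by (simp add: field_simps)
  then show "norm (proj_grad_residual mu (\<lambda>y. G *v (y - x) + gx) P y) \<le> norm v"
    using \<open>mu > 0\<close> by (simp add: proj_grad_residual_def dist_norm)
qed

lemma proj_newton_subgradient:
  fixes P :: "(real^'n) set" and G :: "real^'n^'n" and x y gx :: "real^'n" and mu :: real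
  defines "p \<equiv> closest_point P (y - (1 / mu) *\<^sub>R (G *v (y - x) + gx))"
  assumes G: "pos_semidef G" and P: "convex P" "closed P" "P \<noteq> {}" and "mu > 0"
  shows "(G *v (p - x) + gx) + mu *\<^sub>R ((y - (1 / mu) *\<^sub>R (G *v (y - x) + gx)) - p)
    \<in> csubdiff (Theta fx gx G x P) p"
proof -
  have "(y - (1 / mu) *\<^sub>R (G *v (y - x) + gx)) - p \<in> normal_cone P p"
    unfolding p_def by (rule closest_point_normal_cone[OF P(1,2)])
  then have "mu *\<^sub>R ((y - (1 / mu) *\<^sub>R (G *v (y - x) + gx)) - p) \<in> normal_cone P p"
    using \<open>mu > 0\<close> by (simp add: normal_cone_def mult_nonneg_nonpos)
  moreover have "p \<in> P"
    unfolding p_def by (rule closest_point_in_set[OF P(2,3)])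
  ultimately show ?thesis
    by (intro normal_cone_imp_csubdiff_Theta[OF G]) simp_all
qed

lemma Theta_minimizer_fixed_point:
  assumes "transpose G = G" and P: "convex P" "closed P" and "ys \<in> P" and "mu > 0"
    and ys_min: "\<forall>w. Theta fx gx G x P ys \<le> Theta fx gx G x P w"
  shows "closest_point P (ys - (1 / mu) *\<^sub>R (G *v (ys - x) + gx)) = ys"
proof -
  have n: "- (G *v (ys - x) + gx) \<in> normal_cone P ys"
    by (rule Theta_minimizer_normal_cone[OF assms(1) P(1) \<open>ys \<in> P\<close> ys_min])
  have "ys - (1 / mu) *\<^sub>R (G *v (ys - x) + gx) = ys + (1 / mu) *\<^sub>R (- (G *v (ys - x) + gx))"
    by (simp only: diff_conv_add_uminus scaleR_minus_right)
  also have "closest_point P \<dots> = ys"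
    using closest_point_add_normal[OF P \<open>ys \<in> P\<close> n] \<open>mu > 0\<close> by simp
  finally show ?thesis .
qed

lemma Theta_minimizer_below_nonstationary:
  assumes G: "pos_semidef G" and P: "convex P" "closed P" and "x \<in> P" and "mu > 0"
    and not_stationary: "closest_point P (x - (1 / mu) *\<^sub>R gx) \<noteq> x"
    and ys: "\<And>z. (\<forall>w. Theta fx gx G x P z \<le> Theta fx gx G x P w) \<longleftrightarrow> z = ys"
  shows "ys \<in> P" and "quad_model fx gx G x ys < quad_model fx gx G x x"
proof -
  have ys_min: "\<forall>w. Theta fx gx G x P ys \<le> Theta fx gx G x P w" using ys by blast
  show "ys \<in> P"
  proof (rule ccontr)
    assume "ys \<notin> P"
    then show False
      using ys_min[rule_format, of x] \<open>x \<in> P\<close> by (simp add: Theta_eq_quad_model)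
  qed
  then have "ys \<noteq> x"
    using Theta_minimizer_fixed_point[OF pos_semidef_symmetric[OF G] P _ \<open>mu > 0\<close> ys_min] not_stationary
    by auto
  have "quad_model fx gx G x ys \<le> quad_model fx gx G x x"
    using ys_min[rule_format, of x] \<open>ys \<in> P\<close> \<open>x \<in> P\<close> by (simp add: Theta_eq_quad_model)
  moreover have "quad_model fx gx G x ys \<noteq> quad_model fx gx G x x"
  proof
    assume "quad_model fx gx G x ys = quad_model fx gx G x x"
    then have "\<forall>w. Theta fx gx G x P x \<le> Theta fx gx G x P w"
      using ys_min \<open>ys \<in> P\<close> \<open>x \<in> P\<close> by (simp add: Theta_eq_quad_model)
    then show False using ys[of x] \<open>ys \<noteq> x\<close> by simp
  qed
  ultimately show "quad_model fx gx G x ys < quad_model fx gx G x x" by simp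
qed

lemma proj_newton_step_inexact_near_minimizer:
  fixes P :: "(real^'n) set" and G :: "real^'n^'n" and x gx :: "real^'n" and mu fx bnd :: real
  defines "T \<equiv> \<lambda>y. closest_point P (y - (1 / mu) *\<^sub>R (G *v (y - x) + gx))"
    and "Th \<equiv> Theta fx gx G x P"
  assumes G: "pos_semidef G" and P: "convex P" "closed P" and "x \<in> P" and "mu > 0" "bnd > 0"
    and not_stationary: "closest_point P (x - (1 / mu) *\<^sub>R gx) \<noteq> x"
    and ys: "\<And>z. (\<forall>w. Th z \<le> Th w) \<longleftrightarrow> z = ys"
  shows "\<exists>\<delta>>0. \<forall>y. dist y ys < \<delta> \<longrightarrow> Th (T y) \<le> Th x \<and> dist0 (csubdiff Th (T y)) \<le> ereal bnd"
proof -
  let ?q = "quad_model fx gx G x" and ?grad = "\<lambda>y. G *v (y - x) + gx"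
  define V where "V y = ?grad (T y) + mu *\<^sub>R ((y - (1 / mu) *\<^sub>R ?grad y) - T y)" for y
  have "P \<noteq> {}" using \<open>x \<in> P\<close> by blast
  have "ys \<in> P" and "?q ys < ?q x"
    using Theta_minimizer_below_nonstationary[OF G P \<open>x \<in> P\<close> \<open>mu > 0\<close> not_stationary ys[unfolded Th_def]]
    by simp_all
  have T_ys: "T ys = ys"
    using Theta_minimizer_fixed_point[OF pos_semidef_symmetric[OF G] P \<open>ys \<in> P\<close> \<open>mu > 0\<close>]
      ys[unfolded Th_def, of ys]
    by (simp add: T_def)
  have T_P: "T y \<in> P" for y
    unfolding T_def by (rule closest_point_in_set[OF P(2) \<open>P \<noteq> {}\<close>])
  have cont_grad: "continuous_on UNIV ?grad"
    by (auto intro!: continuous_intros bounded_linear.continuous_on[OF matrix_vector_mul_bounded_linear])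
  have cont_T: "continuous_on UNIV T"
    unfolding T_def using cont_grad
    by (intro continuous_on_compose2[OF continuous_on_closest_point[OF P \<open>P \<noteq> {}\<close>]])
      (auto intro!: continuous_intros)
  have "continuous_on UNIV (\<lambda>y. ?q (T y))"
    by (rule continuous_on_compose2[OF continuous_on_quad_model cont_T]) auto
  then obtain \<delta>1 where "\<delta>1 > 0" and \<delta>1: "\<And>y. dist y ys < \<delta>1 \<Longrightarrow> dist (?q (T y)) (?q (T ys)) < ?q x - ?q ys"
    using \<open>?q ys < ?q x\<close> unfolding continuous_on_iff by (metis UNIV_I diff_gt_0_iff_gt)
  have "continuous_on UNIV V"
    unfolding V_def using continuous_on_compose2[OF cont_grad cont_T] cont_grad cont_T
    by (auto intro!: continuous_intros)
  then obtain \<delta>2 where "\<delta>2 > 0" and \<delta>2: "\<And>y. dist y ys < \<delta>2 \<Longrightarrow> dist (V y) (V ys) < bnd"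
    using \<open>bnd > 0\<close> unfolding continuous_on_iff by (metis UNIV_I)
  have "V ys = 0"
    using T_ys \<open>mu > 0\<close> by (simp add: V_def algebra_simps)
  have "Th (T y) \<le> Th x \<and> dist0 (csubdiff Th (T y)) \<le> ereal bnd" if "dist y ys < min \<delta>1 \<delta>2" for y
  proof
    show "Th (T y) \<le> Th x"
      using \<delta>1[of y] that T_ys T_P[of y] \<open>x \<in> P\<close> by (simp add: dist_real_def Th_def Theta_eq_quad_model)
    have "norm (V y) < bnd"
      using \<delta>2[of y] that \<open>V ys = 0\<close> by (simp add: dist_norm)
    moreover have "V y \<in> csubdiff Th (T y)"
      unfolding V_def T_def Th_def by (rule proj_newton_subgradient[OF G P \<open>P \<noteq> {}\<close> \<open>mu > 0\<close>])
    ultimately show "dist0 (csubdiff Th (T y)) \<le> ereal bnd"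
      using dist0_le_norm by (meson ereal_less_eq(3) less_imp_le order_trans)
  qed
  then show ?thesis
    using \<open>\<delta>1 > 0\<close> \<open>\<delta>2 > 0\<close> by (intro exI[of _ "min \<delta>1 \<delta>2"]) simp
qed

section \<open>The Armijo line search\<close>

lemma descent_lemma:
  fixes f :: "'a::real_inner \<Rightarrow> real"
  assumes grad: "\<forall>z. (f has_derivative (\<lambda>h. gf z \<bullet> h)) (at z)"
    and lipschitz: "\<forall>z\<in>S. \<forall>w\<in>S. norm (gf z - gf w) \<le> L * norm (z - w)"
    and "convex S" "x \<in> S" "y \<in> S"
  shows "f y \<le> f x + gf x \<bullet> (y - x) + L / 2 * (norm (y - x))\<^sup>2"
proof -
  define d where "d = y - x"
  define \<phi> where "\<phi> s = f (x + s *\<^sub>R d) - s * (gf x \<bullet> d) - L / 2 * s\<^sup>2 * (norm d)\<^sup>2" for s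
  have "(\<phi> has_real_derivative gf (x + s *\<^sub>R d) \<bullet> d - gf x \<bullet> d - L * s * (norm d)\<^sup>2) (at s)" for s
    unfolding \<phi>_def
    by (rule derivative_eq_intros has_real_derivative_along_line grad[rule_format] | simp)+
  then obtain s where s: "0 < s" "s < 1"
    and mvt: "\<phi> 1 - \<phi> 0 = gf (x + s *\<^sub>R d) \<bullet> d - gf x \<bullet> d - L * s * (norm d)\<^sup>2"
    using MVT2[of 0 1 \<phi> "\<lambda>s. gf (x + s *\<^sub>R d) \<bullet> d - gf x \<bullet> d - L * s * (norm d)\<^sup>2"] by auto
  have "x + s *\<^sub>R d \<in> S"
    using convexD_alt[OF \<open>convex S\<close> \<open>x \<in> S\<close> \<open>y \<in> S\<close>, of s] s by (simp add: d_def algebra_simps)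
  then have "norm (gf (x + s *\<^sub>R d) - gf x) \<le> L * (s * norm d)"
    using lipschitz \<open>x \<in> S\<close> s by fastforce
  then have "(gf (x + s *\<^sub>R d) - gf x) \<bullet> d \<le> L * (s * norm d) * norm d"
    by (meson Cauchy_Schwarz_ineq2 abs_le_D1 mult_right_mono norm_ge_zero order_trans)
  then have "\<phi> 1 - \<phi> 0 \<le> 0"
    by (simp add: mvt inner_diff_left power2_eq_square algebra_simps)
  then show ?thesis
    by (simp add: \<phi>_def d_def)
qed

lemma armijo_condition_short_step:
  fixes f :: "'a::real_inner \<Rightarrow> real"
  assumes grad: "\<forall>z. (f has_derivative (\<lambda>h. gf z \<bullet> h)) (at z)"
    and lipschitz: "\<forall>z\<in>S. \<forall>w\<in>S. norm (gf z - gf w) \<le> L * norm (z - w)"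
    and S: "convex S" "x \<in> S" "x + d \<in> S"
    and descent: "gf x \<bullet> d \<le> - (e / 2) * (norm d)\<^sup>2"
    and "rho < 1" "0 < s" "s \<le> 1" and short: "L * s \<le> (1 - rho) * e"
  shows "f (x + s *\<^sub>R d) \<le> f x + rho * s * (gf x \<bullet> d)"
proof -
  define D where "D = s * (norm d)\<^sup>2"
  have "D \<ge> 0" using \<open>0 < s\<close> by (simp add: D_def)
  have step: "x + s *\<^sub>R d \<in> S"
    using convexD_alt[OF S, of s] \<open>0 < s\<close> \<open>s \<le> 1\<close> by (simp add: algebra_simps)
  have "(1 - rho) * s * (gf x \<bullet> d) \<le> (1 - rho) * s * (- (e / 2) * (norm d)\<^sup>2)"
    using descent \<open>rho < 1\<close> \<open>0 < s\<close> by (intro mult_left_mono) auto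
  then have decrease: "s * (gf x \<bullet> d) + (1 - rho) * e * D / 2 \<le> rho * s * (gf x \<bullet> d)"
    by (simp add: D_def algebra_simps)
  have "f (x + s *\<^sub>R d) \<le> f x + s * (gf x \<bullet> d) + (L * s) * D / 2"
    using descent_lemma[OF grad lipschitz S(1,2) step] \<open>0 < s\<close>
    by (simp add: D_def power_mult_distrib power2_eq_square mult_ac)
  also have "\<dots> \<le> f x + s * (gf x \<bullet> d) + (1 - rho) * e * D / 2"
    using mult_right_mono[OF short \<open>D \<ge> 0\<close>] by simp
  also have "\<dots> \<le> f x + rho * s * (gf x \<bullet> d)"
    using decrease by simp
  finally show ?thesis .
qed

text \<open>Backtracking stops no later than the first \<open>t\<close> with \<open>beta ^ t \<le> c\<close>; if it stops at
  \<open>t > 0\<close>, then \<open>beta ^ (t - 1) > c\<close>.\<close>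
lemma backtracking_step_lower_bound:
  fixes beta c :: real
  assumes "0 < beta" "beta < 1" "c > 0" and accept: "\<And>t. beta ^ t \<le> c \<Longrightarrow> Q t"
  shows "(\<exists>t. Q t) \<and> min 1 (beta * c) \<le> beta ^ (LEAST t. Q t)"
proof
  obtain t where "beta ^ t < c"
    using real_arch_pow_inv[OF \<open>c > 0\<close> \<open>beta < 1\<close>] by blast
  then show "\<exists>t. Q t" using accept by (meson less_imp_le)
  show "min 1 (beta * c) \<le> beta ^ (LEAST t. Q t)"
  proof (cases "(LEAST t. Q t) = 0")
    case False
    then have "\<not> Q ((LEAST t. Q t) - 1)"
      by (intro not_less_Least) simp
    then have "beta * c < beta * beta ^ ((LEAST t. Q t) - 1)"
      using accept \<open>0 < beta\<close> by (meson mult_strict_left_mono not_le)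
    also have "\<dots> = beta ^ (LEAST t. Q t)"
      using False by (metis Suc_pred' neq0_conv power_Suc)
    finally show ?thesis by simp
  qed simp
qed

lemma Theta_le_imp_descent:
  assumes coercive: "\<And>v. e * (norm v)\<^sup>2 \<le> v \<bullet> (G *v v)"
    and "x \<in> P" and "Theta fx gx G x P y \<le> Theta fx gx G x P x"
  shows "y \<in> P" and "gx \<bullet> (y - x) \<le> - (e / 2) * (norm (y - x))\<^sup>2"
proof -
  show "y \<in> P"
  proof (rule ccontr)
    assume "y \<notin> P"
    then show False using assms(2,3) by (simp add: Theta_eq_quad_model)
  qed
  then have "gx \<bullet> (y - x) + 1/2 * ((y - x) \<bullet> (G *v (y - x))) \<le> 0"
    using assms(2,3) by (simp add: Theta_eq_quad_model quad_model_def)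
  then show "gx \<bullet> (y - x) \<le> - (e / 2) * (norm (y - x))\<^sup>2"
    using coercive[of "y - x"] by simp
qed

lemma model_decrease_line_search:
  fixes f :: "real^'n \<Rightarrow> real"
  assumes grad: "\<forall>z. (f has_derivative (\<lambda>h. gf z \<bullet> h)) (at z)"
    and lipschitz: "\<forall>z\<in>S. \<forall>w\<in>S. norm (gf z - gf w) \<le> L * norm (z - w)" and "L > 0"
    and P: "convex P" "P \<subseteq> S" "x \<in> P"
    and coercive: "\<And>v. e * (norm v)\<^sup>2 \<le> v \<bullet> (G *v v)" and "e > 0"
    and "rho < 1" "0 < beta" "beta < 1"
    and decrease: "Theta fx (gf x) G x P y \<le> Theta fx (gf x) G x P x"
  shows "(\<exists>t. f (x + beta ^ t *\<^sub>R (y - x)) \<le> f x + rho * beta ^ t * (gf x \<bullet> (y - x)))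
    \<and> min 1 ((1 - rho) * e * beta / L)
        \<le> beta ^ (LEAST t. f (x + beta ^ t *\<^sub>R (y - x)) \<le> f x + rho * beta ^ t * (gf x \<bullet> (y - x)))"
proof -
  define armijo where "armijo t \<longleftrightarrow> f (x + beta ^ t *\<^sub>R (y - x)) \<le> f x + rho * beta ^ t * (gf x \<bullet> (y - x))"
    for t
  have "y \<in> P" and descent: "gf x \<bullet> (y - x) \<le> - (e / 2) * (norm (y - x))\<^sup>2"
    using Theta_le_imp_descent[OF coercive P(3) decrease] by auto
  have lipschitz_P: "\<forall>z\<in>P. \<forall>w\<in>P. norm (gf z - gf w) \<le> L * norm (z - w)"
    using lipschitz P(2) by blast
  have c: "0 < (1 - rho) * e / L"
    using \<open>rho < 1\<close> \<open>e > 0\<close> \<open>L > 0\<close> by simp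
  have accept: "armijo t" if "beta ^ t \<le> (1 - rho) * e / L" for t
    unfolding armijo_def
  proof (rule armijo_condition_short_step[OF grad lipschitz_P P(1,3) _ descent \<open>rho < 1\<close>])
    show "x + (y - x) \<in> P" using \<open>y \<in> P\<close> by simp
    show "0 < beta ^ t" "beta ^ t \<le> 1"
      using \<open>0 < beta\<close> \<open>beta < 1\<close> by (simp_all add: power_le_one)
    show "L * beta ^ t \<le> (1 - rho) * e"
      using that \<open>L > 0\<close> by (simp add: field_simps)
  qed
  show ?thesis
    using backtracking_step_lower_bound[where Q = armijo, OF \<open>0 < beta\<close> \<open>beta < 1\<close> c accept]
    unfolding armijo_def by (simp add: mult_ac)
qed

section \<open>The proximal step under the switch condition\<close>

lemma Pi_set_eq:
  "Pi_set B l u z = {y. (\<forall>i. l $ i \<le> y $ i \<and> y $ i \<le> u $ i) \<and> (\<forall>i. z $ i = 0 \<longrightarrow> y $ i = 0)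
      \<and> (\<forall>j. (B *v z) $ j = 0 \<longrightarrow> (B *v y) $ j = 0)}"
  by (auto simp: Pi_set_def box_set_def supp_vec_def)

lemma closed_Pi_set: "closed (Pi_set B l u z)"
  unfolding Pi_set_eq
  by (intro closed_Collect_conj closed_Collect_all closed_Collect_imp closed_Collect_le closed_Collect_eq
      continuous_intros open_Collect_const)

lemma convex_bound_ge:
  fixes x y a u v :: real
  assumes "a \<le> x" "a \<le> y" "0 \<le> u" "0 \<le> v" "u + v = 1"
  shows "a \<le> u * x + v * y"
  using convex_bound_le[of "- x" "- a" "- y" u v] assms by simp

lemma convex_Pi_set: "convex (Pi_set B l u z)"
  unfolding convex_def Pi_set_eq
  by (auto simp: matrix_vector_right_distrib matrix_vector_mult_scaleR intro!: convex_bound_le convex_bound_ge)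

lemma l0_mono: "supp_vec y \<subseteq> supp_vec z \<Longrightarrow> l0 y \<le> l0 z"
  by (simp add: l0_def card_mono)

text \<open>On \<open>Pi_set B l u x\<close> both \<open>l0\<close> terms are at most their value at \<open>xbar\<close>, so
  \<open>xbar\<close> minimises the quadratic term of the prox objective alone there.\<close>
lemma prox_eq_closest_point_Pi_set:
  fixes B :: "real^'n^'p"
  assumes "mu > 0" "lam1 \<ge> 0" "lam2 \<ge> 0" and "x \<in> box_set l u"
    and prox: "xbar \<in> prox (1 / mu) (gfun B lam1 lam2 l u) w"
    and supp: "supp_vec x = supp_vec xbar" "supp_vec (B *v x) = supp_vec (B *v xbar)"
  shows "xbar = closest_point (Pi_set B l u x) w"
proof -
  let ?h = "\<lambda>y. lam1 * l0 (B *v y) + lam2 * l0 y"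
  have opt: "ereal (mu / 2 * (norm (xbar - w))\<^sup>2) + gfun B lam1 lam2 l u xbar
      \<le> ereal (mu / 2 * (norm (y - w))\<^sup>2) + gfun B lam1 lam2 l u y" for y
    using prox by (simp add: prox_def)
  have g_box: "gfun B lam1 lam2 l u y = ereal (?h y)" if "y \<in> box_set l u" for y
    using that by (simp add: gfun_def ind_def)
  have "xbar \<in> box_set l u"
  proof (rule ccontr)
    assume "xbar \<notin> box_set l u"
    then show False
      using opt[of x] g_box[OF \<open>x \<in> box_set l u\<close>] by (simp add: gfun_def ind_def)
  qed
  then have xbar_Pi: "xbar \<in> Pi_set B l u x"
    using supp by (simp add: Pi_set_def)
  have "dist w xbar \<le> dist w y" if "y \<in> Pi_set B l u x" for y
  proof -
    have "y \<in> box_set l u" and "?h y \<le> ?h xbar"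
      using that supp \<open>lam1 \<ge> 0\<close> \<open>lam2 \<ge> 0\<close>
      by (auto simp: Pi_set_def intro!: add_mono mult_left_mono l0_mono)
    then have "mu / 2 * (norm (xbar - w))\<^sup>2 \<le> mu / 2 * (norm (y - w))\<^sup>2"
      using opt[of y] g_box[OF \<open>xbar \<in> box_set l u\<close>] g_box[of y] by simp
    then show ?thesis
      using \<open>mu > 0\<close> by (simp add: dist_norm norm_minus_commute power2_le_iff_abs_le)
  qed
  then show ?thesis
    by (intro closest_point_unique convex_Pi_set closed_Pi_set xbar_Pi) auto
qed

theorem lemma4p1:
  fixes f :: "real^'n \<Rightarrow> real" and gf :: "real^'n \<Rightarrow> real^'n" and Hf :: "real^'n \<Rightarrow> real^'n^'n"
    and B :: "real^'n^'p" and l u :: "real^'n" and lam1 lam2 L1 :: real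
    and eps mumin mumax tau alpha b1 b2 rho sigma vsig beta :: real
    and x xbar :: "real^'n" and mu :: real and mk :: nat and G :: "real^'n^'n"
    and A :: "real^'n^'m" and bb :: "real^'m"
    and hs hs1 hs2 :: "'m \<Rightarrow> real \<Rightarrow> real"
  defines "Om \<equiv> box_set l u"
    and "g \<equiv> gfun B lam1 lam2 l u"
    and "F \<equiv> (\<lambda>z. ereal (f z) + gfun B lam1 lam2 l u z)"
    and "mub \<equiv> mu * tau ^ mk"
    and "e \<equiv> b1 * norm ((mu * tau ^ mk) *\<^sub>R (x - xbar)) powr sigma"
    and "hdiag \<equiv> (\<chi> i. hs2 i ((A *v x - bb) $ i))"
    and "P \<equiv> Pi_set B l u x"
    and "Th \<equiv> Theta (f x) (gf x) G x (Pi_set B l u x)"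
  assumes lam: "lam1 > 0" "lam2 > 0"
    and lu: "\<forall>i. l $ i \<le> 0 \<and> 0 \<le> u $ i"
    and f_C2: "\<forall>z. (f has_derivative (\<lambda>h. gf z \<bullet> h)) (at z)"
              "\<forall>z. (gf has_derivative (\<lambda>h. Hf z *v h)) (at z)"
              "continuous_on UNIV Hf"
    and L1: "L1 > 0" "\<forall>z\<in>Om. \<forall>w\<in>Om. norm (gf z - gf w) \<le> L1 * norm (z - w)"
    and params: "eps \<ge> 0" "0 < mumin" "mumin < mumax" "tau > 1" "alpha > 0" "b1 > 0" "b2 \<ge> 1"
                "0 < rho" "rho < 1/2" "0 < sigma" "sigma < 1/2" "sigma < vsig" "vsig \<le> 1"
                "0 < beta" "beta < 1"
    and x_in: "x \<in> Om"
    and mu: "mumin \<le> mu" "mu \<le> mumax"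
    and xbar: "xbar \<in> prox (1 / mub) g (x - (1 / mub) *\<^sub>R gf x)"
              "F xbar \<le> F x - ereal (alpha / 2 * (norm (x - xbar))\<^sup>2)"
    and mk_least: "\<forall>m<mk. \<not> (\<exists>z \<in> prox (1 / (mu * tau ^ m)) g (x - (1 / (mu * tau ^ m)) *\<^sub>R gf x).
                              F z \<le> F x - ereal (alpha / 2 * (norm (x - z))\<^sup>2))"
    and nostop: "mub * norm (x - xbar) > eps"
    and switch: "supp_vec x = supp_vec xbar" "supp_vec (B *v x) = supp_vec (B *v xbar)"
    and G_choice:
      "G = Hf x + (b2 * max (- lambda_min (Hf x)) 0 + e) *\<^sub>R mat 1
       \<or> ((\<forall>i t. (hs i has_real_derivative hs1 i t) (at t) \<and> (hs1 i has_real_derivative hs2 i t) (at t))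
          \<and> (\<forall>i. continuous_on UNIV (hs2 i))
          \<and> (\<forall>z. f z = (\<Sum>i\<in>UNIV. hs i ((A *v z - bb) $ i)))
          \<and> (G = Hf x + (b2 * max (- lambda_min (diag_mat hdiag)) 0) *\<^sub>R (transpose A ** A) + e *\<^sub>R mat 1
             \<or> G = transpose A ** diag_pos hdiag ** A + e *\<^sub>R mat 1))"
  shows "let bnd = min (1 / mub) 1 / 2 * min (norm (mub *\<^sub>R (x - xbar))) (norm (mub *\<^sub>R (x - xbar)) powr (1 + vsig));
             inex = (\<lambda>y. Th y \<le> Th x \<and> dist0 (csubdiff Th y) \<le> ereal bnd);
             Rk = (\<lambda>y. mub *\<^sub>R (y - closest_point P (y - (1 / mub) *\<^sub>R (G *v (y - x) + gf x))));
             rk = (\<lambda>z. mub *\<^sub>R (z - closest_point P (z - (1 / mub) *\<^sub>R gf z)))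
         in
         (\<exists>ys. (\<forall>z. (\<forall>w. Th z \<le> Th w) \<longleftrightarrow> z = ys)
            \<and> (\<exists>\<delta>>0. \<forall>y. dist y ys < \<delta> \<longrightarrow> inex (y - (1 / mub) *\<^sub>R Rk y)))
       \<and> (\<forall>y. inex y \<longrightarrow>
            (let d = y - x;
                 ls = (\<lambda>t::nat. f (x + beta ^ t *\<^sub>R d) \<le> f x + rho * beta ^ t * (gf x \<bullet> d))
             in (\<exists>t. ls t) \<and>
                beta ^ (LEAST t. ls t) \<ge> min 1 ((1 - rho) * b1 * beta / L1 * norm (mub *\<^sub>R (x - xbar)) powr sigma)))
       \<and> (\<forall>y. dist0 (csubdiff Th y) \<le> ereal bnd \<longrightarrow>
            norm (Rk y) \<le> 1/2 * min (norm (rk x)) (norm (rk x) powr (1 + vsig)))"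
proof -
  let ?grad = "\<lambda>y. G *v (y - x) + gf x" and ?N = "norm (mub *\<^sub>R (x - xbar))"
    and ?armijo = "\<lambda>y t. f (x + beta ^ t *\<^sub>R (y - x)) \<le> f x + rho * beta ^ t * (gf x \<bullet> (y - x))"
  have "mub > 0" using params(2,4) mu(1) by (simp add: mub_def)
  have "x \<noteq> xbar" using nostop params(1) by auto
  then have "?N > 0" using \<open>mub > 0\<close> by simp
  have e_eq: "e = b1 * ?N powr sigma" by (simp add: e_def mub_def)
  then have "e > 0" using \<open>?N > 0\<close> params(6) by (simp add: zero_less_mult_iff)
  obtain M where "pos_semidef M" and "G = M + e *\<^sub>R mat 1"
    using newton_matrix_eq_pos_semidef_plus_id[OF f_C2 params(7) G_choice[unfolded hdiag_def]] by blast
  then have G: "pos_semidef G" and coercive: "\<And>v. e * (norm v)\<^sup>2 \<le> v \<bullet> (G *v v)"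
    using \<open>e > 0\<close> by (simp_all add: pos_semidef_add pos_semidef_scaleR_id pos_semidef_plus_id_coercive)
  have P: "convex P" "closed P" "x \<in> P" "P \<subseteq> Om"
    using x_in by (simp_all add: P_def Om_def convex_Pi_set closed_Pi_set) (auto simp: Pi_set_def)
  have Th_eq: "Th = Theta (f x) (gf x) G x P" by (simp add: Th_def P_def)
  have xbar_eq: "closest_point P (x - (1 / mub) *\<^sub>R gf x) = xbar"
    using prox_eq_closest_point_Pi_set[OF \<open>mub > 0\<close> _ _ _ xbar(1)[unfolded g_def] switch] lam x_in
    by (simp add: P_def Om_def)
  define bnd where "bnd = min (1 / mub) 1 / 2 * min ?N (?N powr (1 + vsig))"
  have "bnd > 0" using \<open>mub > 0\<close> \<open>?N > 0\<close> by (simp add: bnd_def zero_less_mult_iff)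
  have bnd_le: "bnd \<le> 1/2 * min ?N (?N powr (1 + vsig))"
    using mult_right_mono[OF min.cobounded2[of "1 / mub" 1], of "min ?N (?N powr (1 + vsig))"] \<open>?N > 0\<close>
    by (simp add: bnd_def)
  obtain ys where ys: "\<And>z. (\<forall>w. Th z \<le> Th w) \<longleftrightarrow> z = ys"
    using Theta_unique_minimizer[OF G coercive \<open>e > 0\<close> P(1-3)] unfolding Th_eq by blast
  have part_i: "\<exists>\<delta>>0. \<forall>y. dist y ys < \<delta> \<longrightarrow>
      Th (y - (1 / mub) *\<^sub>R proj_grad_residual mub ?grad P y) \<le> Th x
      \<and> dist0 (csubdiff Th (y - (1 / mub) *\<^sub>R proj_grad_residual mub ?grad P y)) \<le> ereal bnd"
    using proj_newton_step_inexact_near_minimizer[OF G P(1-3) \<open>mub > 0\<close> \<open>bnd > 0\<close> _ ys[unfolded Th_eq]]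
      xbar_eq \<open>x \<noteq> xbar\<close> \<open>mub > 0\<close>
    by (simp add: proj_grad_residual_step Th_eq)
  have part_ii: "(\<exists>t. ?armijo y t)
      \<and> min 1 ((1 - rho) * b1 * beta / L1 * ?N powr sigma) \<le> beta ^ (LEAST t. ?armijo y t)"
    if "Th y \<le> Th x" for y
    using model_decrease_line_search[OF f_C2(1) L1(2,1) P(1,4,3) coercive \<open>e > 0\<close> _ params(14,15)]
      that params(9)
    by (simp add: Th_eq e_eq mult_ac)
  have part_iii: "norm (proj_grad_residual mub ?grad P y) \<le> 1/2 * min ?N (?N powr (1 + vsig))"
    if "dist0 (csubdiff Th y) \<le> ereal bnd" for y
    using order_trans[OF norm_proj_grad_residual_le_dist0[OF G P(1,2) \<open>mub > 0\<close>] that[unfolded Th_eq]]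
      bnd_le by simp
  show ?thesis
    unfolding Let_def bnd_def[symmetric] xbar_eq
    using ys part_i[unfolded proj_grad_residual_def] part_ii part_iii[unfolded proj_grad_residual_def]
    by blast
qed

end
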